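(* Let $G$ be a simple graph with edge ideal $I(G)\subseteq R=\Bbbk[x_1,\ldots,x_N]$. Let $e_1,\ldots,e_s$ be distinct edges of $G$, let $a_1,\ldots,a_s>0$ be integers, and set $t-1=a_1+\cdots+a_s$ and $x^{\mathbf e}=e_1^{a_1}\cdots e_s^{a_s}$, where each edge $e_i=\{p,q\}$ is identified with the monomial $x_px_q$. Assume that $I(G)^t:x^{\mathbf e}$ is a squarefree monomial ideal. Then $$I(G)^t:x^{\mathbf e}=I(G)^{s+1}:(e_1\cdots e_s)=\left(I(G)^2:e_1\right)^s:(e_2\cdots e_s).$$
   Context: The edge ideal of a simple graph $G$ on $[N]$ is $I(G)=(x_ix_j\mid\{i,j\}\in E(G))$. *)

theory Defs
  imports Main "HOL-Library.Poly_Mapping"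
begin

text \<open>Polynomial ring k[x_v | v in 'v] over a field, 'v a finite type of N = CARD('v) variables:
  polynomials are finitely supported maps from exponent vectors ('v =>0 nat) to coefficients.\<close>
type_synonym ('v, 'k) mpoly = "('v \<Rightarrow>\<^sub>0 nat) \<Rightarrow>\<^sub>0 'k"

definition ideal_gen :: "'a::comm_ring_1 set \<Rightarrow> 'a set" where
  "ideal_gen S = {x. \<exists>F r. finite F \<and> F \<subseteq> S \<and> x = (\<Sum>g\<in>F. r g * g)}"

definition ideal_pow :: "'a::comm_ring_1 set \<Rightarrow> nat \<Rightarrow> 'a set" where
  "ideal_pow I n = ideal_gen {prod_list xs | xs. length xs = n \<and> set xs \<subseteq> I}"

definition ideal_colon :: "'a::comm_ring_1 set \<Rightarrow> 'a \<Rightarrow> 'a set" where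
  "ideal_colon I f = {g. g * f \<in> I}"

definition sqfree_monomial :: "'v set \<Rightarrow> ('v, 'k::comm_ring_1) mpoly" where
  "sqfree_monomial A = Poly_Mapping.single (\<Sum>v\<in>A. Poly_Mapping.single v 1) 1"

abbreviation edge_monomial :: "'v set \<Rightarrow> ('v, 'k::comm_ring_1) mpoly" where
  "edge_monomial e \<equiv> sqfree_monomial e"

definition simple_graph :: "'v set set \<Rightarrow> bool" where
  "simple_graph E \<longleftrightarrow> (\<forall>e\<in>E. card e = 2)"

definition edge_ideal :: "'v set set \<Rightarrow> ('v, 'k::comm_ring_1) mpoly set" where
  "edge_ideal E = ideal_gen (edge_monomial ` E)"

definition squarefree_monomial_ideal :: "('v, 'k::comm_ring_1) mpoly set \<Rightarrow> bool" where
  "squarefree_monomial_ideal I \<longleftrightarrow> (\<exists>S. S \<subseteq> range sqfree_monomial \<and> I = ideal_gen S)"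

end

theory Submission
  imports Defs "HOL-Library.Multiset"
begin

text \<open>All ideals involved are monomial ideals, so the statement is one about exponent vectors
  and multisets of edges. Following Banerjee, if \<open>x\<^sup>\<alpha> x\<^sup>W \<in> I(G)\<^sup>|\<^sup>W\<^sup>|\<^sup>+\<^sup>1\<close> for a multiset
  \<open>W\<close> of edges, then \<open>x\<^sub>u x\<^sub>v\<close> divides \<open>x\<^sup>\<alpha>\<close> for two vertices joined by a walk that alternates
  between edges of \<open>G\<close> and edges taken from \<open>W\<close>. Such a walk can be shortened until it uses
  every edge of \<open>W\<close> at most once, unless a piece of it closes up into an odd closed walk
  through some vertex \<open>y\<close>. That cannot happen here: it would put \<open>x\<^sub>y\<^sup>2\<close>, hence by squarefreeness
  \<open>x\<^sub>y\<close>, into \<open>I(G)\<^sup>t : x\<^sup>e\<close>, whereas \<open>x\<^sub>y x\<^sup>e\<close> has degree \<open>2t - 1\<close>. Hence only the support of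
  the multiset \<open>e\<^sub>1\<^sup>a\<^sup>1 \<dots> e\<^sub>s\<^sup>a\<^sup>s\<close> matters, which is the first equation. The second one follows
  in the same way from \<open>I(G)\<^sup>k\<^sup>+\<^sup>2 : e \<subseteq> (I(G)\<^sup>2 : e) I(G)\<^sup>k\<close> and \<open>(I(G)\<^sup>2 : e)\<^sup>k \<subseteq> I(G)\<^sup>2\<^sup>k : e\<^sup>k\<close>.\<close>

section \<open>Generated ideals\<close>

lemma ideal_gen_least:
  assumes "T \<subseteq> J" "0 \<in> J" "\<And>x y. x \<in> J \<Longrightarrow> y \<in> J \<Longrightarrow> x + y \<in> J" "\<And>c x. x \<in> J \<Longrightarrow> c * x \<in> J"
  shows "ideal_gen T \<subseteq> J"
proof
  fix x assume "x \<in> ideal_gen T"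
  then obtain F r where F: "finite F" "F \<subseteq> T" and x: "x = (\<Sum>g\<in>F. r g * g)"
    unfolding ideal_gen_def by blast
  from F show "x \<in> J"
    unfolding x by (induction F) (use assms in auto)
qed

lemma in_ideal_gen: "g \<in> S \<Longrightarrow> g \<in> ideal_gen S"
  unfolding ideal_gen_def
  by (intro CollectI exI[of _ "{g}"] exI[of _ "\<lambda>_. 1"]) auto

lemma zero_in_ideal_gen: "0 \<in> ideal_gen S"
  unfolding ideal_gen_def by (intro CollectI exI[of _ "{}"]) auto

lemma add_in_ideal_gen:
  assumes "x \<in> ideal_gen S" "y \<in> ideal_gen S"
  shows "x + y \<in> ideal_gen S"
proof -
  obtain F1 r1 where 1: "finite F1" "F1 \<subseteq> S" "x = (\<Sum>g\<in>F1. r1 g * g)"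
    using assms(1) unfolding ideal_gen_def by blast
  obtain F2 r2 where 2: "finite F2" "F2 \<subseteq> S" "y = (\<Sum>g\<in>F2. r2 g * g)"
    using assms(2) unfolding ideal_gen_def by blast
  define r where "r g = (if g \<in> F1 then r1 g else 0) + (if g \<in> F2 then r2 g else 0)" for g
  have "(\<Sum>g\<in>F1 \<union> F2. (if g \<in> F1 then r1 g else 0) * g) = x"
    unfolding 1 by (rule sum.mono_neutral_cong_right) (use 1 2 in auto)
  moreover have "(\<Sum>g\<in>F1 \<union> F2. (if g \<in> F2 then r2 g else 0) * g) = y"
    unfolding 2 by (rule sum.mono_neutral_cong_right) (use 1 2 in auto)
  ultimately have "x + y = (\<Sum>g\<in>F1 \<union> F2. r g * g)"
    unfolding r_def distrib_right sum.distrib by simp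
  then show ?thesis unfolding ideal_gen_def using 1 2 by blast
qed

lemma mult_in_ideal_gen: "x \<in> ideal_gen S \<Longrightarrow> c * x \<in> ideal_gen S"
proof -
  assume "x \<in> ideal_gen S"
  then obtain F r where F: "finite F" "F \<subseteq> S" and x: "x = (\<Sum>g\<in>F. r g * g)"
    unfolding ideal_gen_def by blast
  have "c * x = (\<Sum>g\<in>F. (c * r g) * g)"
    unfolding x sum_distrib_left by (simp add: mult.assoc)
  then show ?thesis unfolding ideal_gen_def
    using F by (intro CollectI exI[of _ F] exI[of _ "\<lambda>g. c * r g"]) auto
qed

lemma sum_in_ideal_gen: "(\<And>i. i \<in> A \<Longrightarrow> f i \<in> ideal_gen S) \<Longrightarrow> sum f A \<in> ideal_gen S"
  by (induction A rule: infinite_finite_induct) (auto intro: zero_in_ideal_gen add_in_ideal_gen)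

lemma ideal_gen_subset_ideal_gen: "T \<subseteq> ideal_gen S \<Longrightarrow> ideal_gen T \<subseteq> ideal_gen S"
  by (rule ideal_gen_least) (auto intro: zero_in_ideal_gen add_in_ideal_gen mult_in_ideal_gen)

section \<open>Monomial ideals\<close>

definition adds :: "('v \<Rightarrow>\<^sub>0 nat) \<Rightarrow> ('v \<Rightarrow>\<^sub>0 nat) \<Rightarrow> bool" (infix \<open>adds\<close> 50) where
  "a adds b \<longleftrightarrow> (\<forall>v. Poly_Mapping.lookup a v \<le> Poly_Mapping.lookup b v)"

lemma adds_refl [simp]: "a adds a"
  by (simp add: adds_def)

lemma adds_trans: "a adds b \<Longrightarrow> b adds c \<Longrightarrow> a adds c"
  unfolding adds_def using order_trans by blast

lemma add_adds_add: "a adds b \<Longrightarrow> c adds d \<Longrightarrow> a + c adds b + d"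
  by (simp add: adds_def lookup_add add_mono)

lemma adds_diff_add: "a adds b \<Longrightarrow> (b - a) + a = b"
  by (rule poly_mapping_eqI) (simp add: adds_def lookup_add lookup_minus)

definition deg :: "('v \<Rightarrow>\<^sub>0 nat) \<Rightarrow> nat" where
  "deg a = Sum_any (Poly_Mapping.lookup a)"

lemma deg_add [simp]: "deg (a + b) = deg a + deg b"
  unfolding deg_def lookup_add by (rule Sum_any.distrib) simp_all

lemma deg_single [simp]: "deg (Poly_Mapping.single v n) = n"
  by (simp add: deg_def lookup_single)

lemma deg_mono: "a adds b \<Longrightarrow> deg a \<le> deg b"
proof -
  assume ab: "a adds b"
  have "{v. Poly_Mapping.lookup a v \<noteq> 0} \<subseteq> Poly_Mapping.keys b"
    using ab unfolding adds_def by (auto simp: in_keys_iff) (metis less_le_trans)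
  then have "deg a = (\<Sum>v\<in>Poly_Mapping.keys b. Poly_Mapping.lookup a v)"
    unfolding deg_def by (rule Sum_any.expand_superset[OF finite_keys])
  also have "\<dots> \<le> (\<Sum>v\<in>Poly_Mapping.keys b. Poly_Mapping.lookup b v)"
    using ab by (intro sum_mono) (simp add: adds_def)
  also have "\<dots> = deg b"
    unfolding deg_def by (rule Sum_any.expand_superset[symmetric]) (auto simp: in_keys_iff)
  finally show ?thesis .
qed

definition monomial :: "('v \<Rightarrow>\<^sub>0 nat) \<Rightarrow> ('v, 'k::comm_ring_1) mpoly" where
  "monomial a = Poly_Mapping.single a 1"

lemma monomial_zero: "monomial 0 = 1"
  by (simp add: monomial_def)

lemma monomial_add: "monomial (a + b) = monomial a * monomial b"
  by (simp add: monomial_def mult_single)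

lemma monomial_sum_list: "monomial (sum_list as) = prod_list (map monomial as)"
  by (induction as) (simp_all add: monomial_zero monomial_add)

definition monomial_ideal :: "('v \<Rightarrow>\<^sub>0 nat) set \<Rightarrow> ('v, 'k::comm_ring_1) mpoly set" where
  "monomial_ideal S = {f. \<forall>a\<in>Poly_Mapping.keys f. \<exists>b\<in>S. b adds a}"

lemma monomial_in_monomial_ideal_iff:
  "monomial a \<in> monomial_ideal S \<longleftrightarrow> (\<exists>b\<in>S. b adds a)"
  by (simp add: monomial_ideal_def monomial_def)

lemma monomial_in_monomial_ideal: "a \<in> S \<Longrightarrow> monomial a \<in> monomial_ideal S"
  using adds_refl monomial_in_monomial_ideal_iff by blast

lemma monomial_ideal_mono:
  "(\<And>a. a \<in> A \<Longrightarrow> \<exists>b\<in>B. b adds a) \<Longrightarrow> monomial_ideal A \<subseteq> monomial_ideal B"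
  unfolding monomial_ideal_def using adds_trans by blast

lemma zero_in_monomial_ideal: "0 \<in> monomial_ideal S"
  by (simp add: monomial_ideal_def)

lemma add_in_monomial_ideal:
  "f \<in> monomial_ideal S \<Longrightarrow> g \<in> monomial_ideal S \<Longrightarrow> f + g \<in> monomial_ideal S"
  using keys_add[of f g] unfolding monomial_ideal_def by blast

lemma mult_in_monomial_ideal:
  fixes f g :: "('v, 'k::comm_ring_1) mpoly"
  assumes "f \<in> monomial_ideal A" "g \<in> monomial_ideal B"
  shows "f * g \<in> monomial_ideal {a + b | a b. a \<in> A \<and> b \<in> B}"
  unfolding monomial_ideal_def
proof (intro CollectI ballI)
  fix c assume "c \<in> Poly_Mapping.keys (f * g)"
  then obtain a b where ab: "a \<in> Poly_Mapping.keys f" "b \<in> Poly_Mapping.keys g" "c = a + b"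
    using keys_mult by blast
  obtain a' where "a' \<in> A" "a' adds a" using assms(1) ab(1) unfolding monomial_ideal_def by blast
  moreover obtain b' where "b' \<in> B" "b' adds b" using assms(2) ab(2) unfolding monomial_ideal_def by blast
  ultimately show "\<exists>d\<in>{a + b |a b. a \<in> A \<and> b \<in> B}. d adds c"
    using ab(3) add_adds_add by blast
qed

lemma mult_left_in_monomial_ideal:
  fixes f g :: "('v, 'k::comm_ring_1) mpoly"
  assumes "g \<in> monomial_ideal S"
  shows "f * g \<in> monomial_ideal S"
proof -
  have "f \<in> monomial_ideal {0}"
    by (simp add: monomial_ideal_def adds_def)
  then have "f * g \<in> monomial_ideal {a + b | a b. a \<in> {0} \<and> b \<in> S}"
    using mult_in_monomial_ideal assms by blast
  then show ?thesis by simp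
qed

lemma ideal_gen_subset_monomial_ideal:
  fixes T :: "('v, 'k::comm_ring_1) mpoly set"
  shows "T \<subseteq> monomial_ideal S \<Longrightarrow> ideal_gen T \<subseteq> monomial_ideal S"
  by (rule ideal_gen_least)
    (auto intro: zero_in_monomial_ideal add_in_monomial_ideal mult_left_in_monomial_ideal)

lemma poly_mapping_sum_single:
  "f = (\<Sum>a\<in>Poly_Mapping.keys f. Poly_Mapping.single a (Poly_Mapping.lookup f a))"
  by (rule poly_mapping_eqI) (auto simp: lookup_sum lookup_single when_def in_keys_iff)

lemma keys_mult_monomial:
  "Poly_Mapping.keys (f * monomial b) = (\<lambda>a. a + b) ` Poly_Mapping.keys f"
proof -
  have "f * monomial b = (\<Sum>a\<in>Poly_Mapping.keys f. Poly_Mapping.single (a + b) (Poly_Mapping.lookup f a))"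
    by (subst poly_mapping_sum_single) (simp add: sum_distrib_right monomial_def mult_single)
  then have "Poly_Mapping.lookup (f * monomial b) (a + b) = Poly_Mapping.lookup f a" for a
    by (auto simp: lookup_sum lookup_single when_def in_keys_iff)
  then show ?thesis
    using keys_mult[of f "monomial b"] by (force simp: monomial_def in_keys_iff)
qed

lemma ideal_gen_monomial:
  "ideal_gen (monomial ` S) = (monomial_ideal S :: ('v, 'k::comm_ring_1) mpoly set)"
proof
  show "ideal_gen (monomial ` S) \<subseteq> (monomial_ideal S :: ('v, 'k) mpoly set)"
    by (rule ideal_gen_subset_monomial_ideal) (auto intro: monomial_in_monomial_ideal)
  show "monomial_ideal S \<subseteq> (ideal_gen (monomial ` S) :: ('v, 'k) mpoly set)"
  proof
    fix f :: "('v, 'k) mpoly" assume f: "f \<in> monomial_ideal S"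
    have "Poly_Mapping.single a (Poly_Mapping.lookup f a) \<in> ideal_gen (monomial ` S)"
      if a: "a \<in> Poly_Mapping.keys f" for a
    proof -
      obtain b where b: "b \<in> S" "b adds a" using f a unfolding monomial_ideal_def by blast
      have "Poly_Mapping.single a (Poly_Mapping.lookup f a)
          = Poly_Mapping.single (a - b) (Poly_Mapping.lookup f a) * monomial b"
        by (simp add: monomial_def mult_single adds_diff_add[OF b(2)])
      then show ?thesis using b(1) by (metis image_eqI in_ideal_gen mult_in_ideal_gen)
    qed
    then have "(\<Sum>a\<in>Poly_Mapping.keys f. Poly_Mapping.single a (Poly_Mapping.lookup f a))
        \<in> ideal_gen (monomial ` S)"
      by (rule sum_in_ideal_gen)
    then show "f \<in> ideal_gen (monomial ` S)"
      by (subst poly_mapping_sum_single)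
  qed
qed

definition nfold_sums :: "('v \<Rightarrow>\<^sub>0 nat) set \<Rightarrow> nat \<Rightarrow> ('v \<Rightarrow>\<^sub>0 nat) set" where
  "nfold_sums S n = {sum_list bs | bs. length bs = n \<and> set bs \<subseteq> S}"

lemma prod_list_in_monomial_ideal:
  fixes fs :: "('v, 'k::comm_ring_1) mpoly list"
  assumes "set fs \<subseteq> monomial_ideal S"
  shows "prod_list fs \<in> monomial_ideal (nfold_sums S (length fs))"
  using assms
proof (induction fs)
  case Nil
  have "0 \<in> nfold_sums S 0" unfolding nfold_sums_def by auto
  then show ?case
    using monomial_in_monomial_ideal by (force simp: monomial_zero)
next
  case (Cons f fs)
  then have "f * prod_list fs \<in> monomial_ideal {a + b | a b. a \<in> S \<and> b \<in> nfold_sums S (length fs)}"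
    by (intro mult_in_monomial_ideal) auto
  also have "\<dots> \<subseteq> monomial_ideal (nfold_sums S (length (f # fs)))"
  proof (rule monomial_ideal_mono)
    fix c assume "c \<in> {a + b | a b. a \<in> S \<and> b \<in> nfold_sums S (length fs)}"
    then obtain a bs where "c = sum_list (a # bs)" "length bs = length fs" "set (a # bs) \<subseteq> S"
      unfolding nfold_sums_def by auto
    then have "c \<in> nfold_sums S (length (f # fs))"
      unfolding nfold_sums_def by (intro CollectI exI[of _ "a # bs"]) auto
    then show "\<exists>b\<in>nfold_sums S (length (f # fs)). b adds c" using adds_refl by blast
  qed
  finally show ?case by simp
qed

lemma ideal_pow_monomial_ideal:
  "ideal_pow (monomial_ideal S :: ('v, 'k::comm_ring_1) mpoly set) n = monomial_ideal (nfold_sums S n)"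
proof
  show "ideal_pow (monomial_ideal S :: ('v, 'k) mpoly set) n \<subseteq> monomial_ideal (nfold_sums S n)"
    unfolding ideal_pow_def
    by (rule ideal_gen_subset_monomial_ideal) (auto dest: prod_list_in_monomial_ideal)
  have "monomial (sum_list bs) \<in> ideal_pow (monomial_ideal S :: ('v, 'k) mpoly set) n"
    if "length bs = n" "set bs \<subseteq> S" for bs
    unfolding ideal_pow_def monomial_sum_list using that
    by (intro in_ideal_gen CollectI exI[of _ "map monomial bs"])
      (auto intro: monomial_in_monomial_ideal)
  then have "ideal_gen (monomial ` nfold_sums S n) \<subseteq> ideal_pow (monomial_ideal S :: ('v, 'k) mpoly set) n"
    unfolding nfold_sums_def ideal_pow_def by (intro ideal_gen_subset_ideal_gen) auto
  then show "monomial_ideal (nfold_sums S n) \<subseteq> ideal_pow (monomial_ideal S :: ('v, 'k) mpoly set) n"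
    by (simp only: ideal_gen_monomial)
qed

lemma ideal_colon_monomial_ideal:
  "ideal_colon (monomial_ideal S :: ('v, 'k::comm_ring_1) mpoly set) (monomial c)
    = monomial_ideal {a. \<exists>b\<in>S. b adds a + c}"
proof (intro set_eqI iffI)
  fix f :: "('v, 'k) mpoly"
  assume "f \<in> ideal_colon (monomial_ideal S) (monomial c)"
  then have "\<forall>a\<in>Poly_Mapping.keys f. \<exists>b\<in>S. b adds a + c"
    unfolding ideal_colon_def monomial_ideal_def using keys_mult_monomial[of f c] by auto
  then show "f \<in> monomial_ideal {a. \<exists>b\<in>S. b adds a + c}"
    unfolding monomial_ideal_def using adds_refl by blast
next
  have mono: "b adds a' + c \<Longrightarrow> a' adds a \<Longrightarrow> b adds a + c" for a a' b
    by (meson add_adds_add adds_refl adds_trans)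
  fix f :: "('v, 'k) mpoly"
  assume "f \<in> monomial_ideal {a. \<exists>b\<in>S. b adds a + c}"
  then show "f \<in> ideal_colon (monomial_ideal S) (monomial c)"
    unfolding ideal_colon_def monomial_ideal_def using keys_mult_monomial[of f c] mono by fastforce
qed

section \<open>Monomials of edges and powers of the edge ideal\<close>

abbreviation var_exp :: "'v \<Rightarrow> ('v \<Rightarrow>\<^sub>0 nat)" where
  "var_exp v \<equiv> Poly_Mapping.single v 1"

definition sqfree_exp :: "'v set \<Rightarrow> ('v \<Rightarrow>\<^sub>0 nat)" where
  "sqfree_exp A = (\<Sum>v\<in>A. var_exp v)"

lemma sqfree_monomial_eq: "sqfree_monomial A = monomial (sqfree_exp A)"
  by (simp add: sqfree_monomial_def monomial_def sqfree_exp_def)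

lemma lookup_sqfree_exp: "finite A \<Longrightarrow> Poly_Mapping.lookup (sqfree_exp A) v = (if v \<in> A then 1 else 0)"
  by (simp add: sqfree_exp_def lookup_sum lookup_single when_def)

lemma lookup_sqfree_exp_outside: "v \<notin> A \<Longrightarrow> Poly_Mapping.lookup (sqfree_exp A) v = 0"
  by (auto simp: sqfree_exp_def lookup_sum lookup_single when_def intro: sum.neutral)

lemma sqfree_exp_doubleton: "u \<noteq> v \<Longrightarrow> sqfree_exp {u, v} = var_exp u + var_exp v"
  by (simp add: sqfree_exp_def)

lemma deg_zero [simp]: "deg 0 = 0"
  by (simp add: deg_def)

lemma deg_sqfree_exp: "deg (sqfree_exp A) = card A"
  by (induction A rule: infinite_finite_induct) (simp_all add: sqfree_exp_def)

definition edges_exp :: "'v set multiset \<Rightarrow> ('v \<Rightarrow>\<^sub>0 nat)" where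
  "edges_exp F = (\<Sum>f\<in>#F. sqfree_exp f)"

lemma edges_exp_empty [simp]: "edges_exp {#} = 0"
  and edges_exp_add_mset [simp]: "edges_exp (add_mset f F) = sqfree_exp f + edges_exp F"
  and edges_exp_union [simp]: "edges_exp (F + G) = edges_exp F + edges_exp G"
  by (simp_all add: edges_exp_def)

lemma edges_exp_mset: "edges_exp (mset fs) = sum_list (map sqfree_exp fs)"
  by (induction fs) auto

lemma deg_edges_exp: "\<forall>f\<in>#F. card f = 2 \<Longrightarrow> deg (edges_exp F) = 2 * size F"
  by (induction F) (auto simp: deg_sqfree_exp)

lemma lookup_edges_exp_pos: "0 < Poly_Mapping.lookup (edges_exp F) v \<Longrightarrow> \<exists>f\<in>#F. v \<in> f"
  by (induction F) (auto simp: lookup_add lookup_sqfree_exp_outside)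

lemma lookup_edges_exp_mem:
  "f \<in># F \<Longrightarrow> v \<in> f \<Longrightarrow> finite f \<Longrightarrow> 1 \<le> Poly_Mapping.lookup (edges_exp F) v"
  by (induction F) (auto simp: lookup_add lookup_sqfree_exp)

lemma sqfree_monomial_power:
  "(sqfree_monomial A :: ('v, 'k::comm_ring_1) mpoly) ^ n = monomial (edges_exp (replicate_mset n A))"
  by (induction n) (simp_all add: sqfree_monomial_eq monomial_add monomial_zero)

lemma prod_sqfree_monomial_power:
  "finite I \<Longrightarrow> (\<Prod>i\<in>I. (sqfree_monomial (e i) :: ('v, 'k::comm_ring_1) mpoly) ^ a i)
    = monomial (edges_exp (\<Sum>i\<in>I. replicate_mset (a i) (e i)))"
  by (induction I rule: finite_induct) (simp_all add: sqfree_monomial_power monomial_add monomial_zero)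

lemma prod_sqfree_monomial:
  "finite I \<Longrightarrow> (\<Prod>i\<in>I. (sqfree_monomial (e i) :: ('v, 'k::comm_ring_1) mpoly))
    = monomial (edges_exp (\<Sum>i\<in>I. {#e i#}))"
  by (induction I rule: finite_induct) (simp_all add: sqfree_monomial_eq monomial_add monomial_zero)

text \<open>\<open>in_edge_pow E k d\<close> says that the monomial with exponent \<open>d\<close> lies in \<open>I(G)\<^sup>k\<close>.\<close>

definition in_edge_pow :: "'v set set \<Rightarrow> nat \<Rightarrow> ('v \<Rightarrow>\<^sub>0 nat) \<Rightarrow> bool" where
  "in_edge_pow E k d \<longleftrightarrow> (\<exists>F. set_mset F \<subseteq> E \<and> size F = k \<and> edges_exp F adds d)"

lemma in_edge_pow_mono: "in_edge_pow E k d \<Longrightarrow> d adds d' \<Longrightarrow> in_edge_pow E k d'"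
  unfolding in_edge_pow_def using adds_trans by blast

lemma in_edge_pow_add: "in_edge_pow E k d \<Longrightarrow> in_edge_pow E l d' \<Longrightarrow> in_edge_pow E (k + l) (d + d')"
  unfolding in_edge_pow_def
  by (metis add_adds_add edges_exp_union le_sup_iff set_mset_union size_union)

lemma in_edge_pow_edges_exp: "set_mset F \<subseteq> E \<Longrightarrow> in_edge_pow E (size F) (edges_exp F)"
  unfolding in_edge_pow_def by auto

lemma in_edge_pow_deg: "\<forall>f\<in>E. card f = 2 \<Longrightarrow> in_edge_pow E k d \<Longrightarrow> 2 * k \<le> deg d"
  unfolding in_edge_pow_def by (metis deg_edges_exp deg_mono subsetD)

lemma in_edge_pow_colon_mono:
  assumes "in_edge_pow E (size C + 1) (b + edges_exp C)" "C \<subseteq># W" "set_mset W \<subseteq> E"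
  shows "in_edge_pow E (size W + 1) (b + edges_exp W)"
proof -
  have "set_mset (W - C) \<subseteq> E" using assms(3) by (meson in_diffD subset_iff)
  then have "in_edge_pow E (size C + 1 + size (W - C)) (b + edges_exp C + edges_exp (W - C))"
    using assms(1) in_edge_pow_add in_edge_pow_edges_exp by blast
  moreover have "size C + 1 + size (W - C) = size W + 1"
    using assms(2) by (simp add: size_Diff_submset size_mset_mono)
  moreover have "edges_exp C + edges_exp (W - C) = edges_exp W"
    using assms(2) by (metis edges_exp_union subset_mset.add_diff_inverse)
  ultimately show ?thesis by (simp add: add.assoc)
qed

lemma in_edge_pow_iff_nfold_sums:
  "in_edge_pow E k d \<longleftrightarrow> (\<exists>g\<in>nfold_sums (sqfree_exp ` E) k. g adds d)"
proof
  assume "in_edge_pow E k d"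
  then obtain F where F: "set_mset F \<subseteq> E" "size F = k" "edges_exp F adds d"
    unfolding in_edge_pow_def by blast
  obtain fs where fs: "mset fs = F" using ex_mset by blast
  then have "sum_list (map sqfree_exp fs) \<in> nfold_sums (sqfree_exp ` E) k"
    unfolding nfold_sums_def using F by (intro CollectI exI[of _ "map sqfree_exp fs"]) auto
  then show "\<exists>g\<in>nfold_sums (sqfree_exp ` E) k. g adds d"
    using F(3) fs edges_exp_mset by metis
next
  assume "\<exists>g\<in>nfold_sums (sqfree_exp ` E) k. g adds d"
  then obtain gs where gs: "length gs = k" "set gs \<subseteq> sqfree_exp ` E" "sum_list gs adds d"
    unfolding nfold_sums_def by blast
  define fs where "fs = map (inv_into E sqfree_exp) gs"
  have "gs = map sqfree_exp fs"
    unfolding fs_def using gs(2) by (simp add: map_idI f_inv_into_f subset_iff)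
  moreover have "set fs \<subseteq> E"
    unfolding fs_def using gs(2) by (auto intro: inv_into_into)
  ultimately show "in_edge_pow E k d"
    unfolding in_edge_pow_def using gs by (intro exI[of _ "mset fs"]) (auto simp: edges_exp_mset)
qed

lemma edge_ideal_eq_monomial_ideal:
  "edge_ideal E = (monomial_ideal (sqfree_exp ` E) :: ('v, 'k::comm_ring_1) mpoly set)"
  unfolding edge_ideal_def sqfree_monomial_eq image_image[symmetric] by (rule ideal_gen_monomial)

lemma ideal_colon_edge_pow:
  "ideal_colon (ideal_pow (edge_ideal E :: ('v, 'k::comm_ring_1) mpoly set) k) (monomial c)
    = monomial_ideal {b. in_edge_pow E k (b + c)}"
  unfolding edge_ideal_eq_monomial_ideal ideal_pow_monomial_ideal ideal_colon_monomial_ideal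
    in_edge_pow_iff_nfold_sums ..

section \<open>Even connections\<close>

text \<open>\<open>even_conn E B u v\<close>: a walk \<open>u = p\<^sub>0, p\<^sub>1, \<dots>, p\<^sub>2\<^sub>l\<^sub>+\<^sub>1 = v\<close> whose odd steps
  \<open>{p\<^sub>2\<^sub>i, p\<^sub>2\<^sub>i\<^sub>+\<^sub>1}\<close> are edges of the graph and whose even steps are exactly the
  \<open>l\<close> edges of the multiset \<open>B\<close>. For \<open>u = v\<close> this is a closed walk of odd length.\<close>

inductive even_conn :: "'v set set \<Rightarrow> 'v set multiset \<Rightarrow> 'v \<Rightarrow> 'v \<Rightarrow> bool" for E where
  edge: "{u, v} \<in> E \<Longrightarrow> u \<noteq> v \<Longrightarrow> even_conn E {#} u v"
| step: "{u, a} \<in> E \<Longrightarrow> u \<noteq> a \<Longrightarrow> a \<noteq> b \<Longrightarrow> even_conn E B b v \<Longrightarrow> even_conn E (add_mset {a, b} B) u v"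

lemma even_conn_in_edge_pow:
  "even_conn E B u v \<Longrightarrow> in_edge_pow E (size B + 1) (var_exp u + var_exp v + edges_exp B)"
proof (induction rule: even_conn.induct)
  case (edge u v)
  then show ?case
    using in_edge_pow_edges_exp[of "{#{u, v}#}" E] by (simp add: sqfree_exp_doubleton)
next
  case (step u a b B v)
  have "in_edge_pow E (1 + (size B + 1)) (sqfree_exp {u, a} + (var_exp b + var_exp v + edges_exp B))"
    using step in_edge_pow_edges_exp[of "{#{u, a}#}" E] in_edge_pow_add by fastforce
  then show ?case
    using step by (simp add: sqfree_exp_doubleton algebra_simps)
qed

lemma even_conn_append:
  assumes "even_conn E B1 u a" "a \<noteq> b" "even_conn E B2 b v"
  shows "even_conn E (B1 + add_mset {a, b} B2) u v"
  using assms
proof (induction rule: even_conn.induct)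
  case (edge u a)
  then show ?case using even_conn.step by fastforce
next
  case (step u a' b' B a)
  then have "even_conn E (add_mset {a', b'} (B + add_mset {a, b} B2)) u v"
    by (intro even_conn.step) auto
  then show ?case by (simp add: add_mset_commute)
qed

lemma even_conn_sym:
  assumes "even_conn E B u v"
  shows "even_conn E B v u"
  using assms
proof (induction rule: even_conn.induct)
  case (edge u v)
  then show ?case by (intro even_conn.edge) (auto simp: insert_commute)
next
  case (step u a b B v)
  have "even_conn E {#} a u" using step by (intro even_conn.edge) (auto simp: insert_commute)
  then have "even_conn E (B + add_mset {b, a} {#}) v u"
    using step by (intro even_conn_append) auto
  then show ?case by (simp add: insert_commute)
qed

lemma even_conn_split:
  assumes "even_conn E B u v" "f \<in># B"
  obtains a b B1 B2 where "f = {a, b}" "a \<noteq> b" "B = B1 + add_mset f B2"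
    "even_conn E B1 u a" "even_conn E B2 b v"
  using assms
proof (induction arbitrary: thesis rule: even_conn.induct)
  case (edge u v)
  then show ?case by simp
next
  case (step u a' b' B v)
  show ?case
  proof (cases "f = {a', b'}")
    case True
    have "even_conn E {#} u a'" using step by (intro even_conn.edge)
    then show ?thesis using True step by (intro step.prems(1)[of a' b' "{#}" B]) auto
  next
    case False
    then have "f \<in># B" using step by auto
    then obtain a b B1 B2 where ab: "f = {a, b}" "a \<noteq> b" "B = B1 + add_mset f B2"
      "even_conn E B1 b' a" "even_conn E B2 b v"
      using step.IH by blast
    have "even_conn E (add_mset {a', b'} B1) u a" using step(1-3) ab(4) by (rule even_conn.step)
    then show ?thesis using ab by (intro step.prems(1)[of a b "add_mset {a', b'} B1" B2]) auto
  qed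
qed

lemma even_conn_shortcut:
  assumes "even_conn E B1 u a" "a \<noteq> b" "even_conn E B2 b v" "{a, b} \<in># B1"
  shows "(\<exists>C. C \<subset># B1 + add_mset {a, b} B2 \<and> even_conn E C u v)
    \<or> (\<exists>C y. C \<subset># B1 + add_mset {a, b} B2 \<and> even_conn E C y y)"
proof -
  obtain a' b' C1 C2 where C: "{a, b} = {a', b'}" "B1 = C1 + add_mset {a, b} C2"
    "even_conn E C1 u a'" "even_conn E C2 b' a"
    using even_conn_split[OF assms(1,4)] by metis
  have proper: "C1 + add_mset {a, b} B2 \<subset># B1 + add_mset {a, b} B2" "C2 \<subset># B1 + add_mset {a, b} B2"
    unfolding C(2) by (simp_all add: subset_mset.less_le_not_le)
  consider "a' = a" "b' = b" | "a' = b" "b' = a"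
    using C(1) assms(2) by (auto simp: doubleton_eq_iff)
  then show ?thesis
  proof cases
    case 1
    then have "even_conn E (C1 + add_mset {a, b} B2) u v"
      using even_conn_append[OF _ assms(2,3)] C(3) by simp
    then show ?thesis using proper(1) by blast
  next
    case 2
    then show ?thesis using proper(2) C(4) by blast
  qed
qed

lemma even_conn_repeated_edge:
  assumes "even_conn E B u v" "2 \<le> count B f"
  shows "(\<exists>C. C \<subset># B \<and> even_conn E C u v) \<or> (\<exists>C y. C \<subset># B \<and> even_conn E C y y)"
proof -
  obtain a b B1 B2 where ab: "f = {a, b}" "a \<noteq> b" "B = B1 + add_mset f B2"
    "even_conn E B1 u a" "even_conn E B2 b v"
    using even_conn_split[OF assms(1)] assms(2) by (metis count_eq_zero_iff not_numeral_le_zero)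
  have "f \<in># B1 \<or> f \<in># B2" using assms(2) ab(3) by (auto simp: not_in_iff)
  then show ?thesis
  proof
    assume "f \<in># B1"
    then show ?thesis using even_conn_shortcut[OF ab(4,2,5)] ab(1,3) by simp
  next
    assume "f \<in># B2"
    then have "(\<exists>C. C \<subset># B \<and> even_conn E C v u) \<or> (\<exists>C y. C \<subset># B \<and> even_conn E C y y)"
      using even_conn_shortcut[OF even_conn_sym[OF ab(5)] ab(2)[symmetric] even_conn_sym[OF ab(4)]]
        ab(1,3) by (simp add: insert_commute add.commute)
    moreover have "even_conn E C v u \<Longrightarrow> even_conn E C u v" for C
      by (rule even_conn_sym)
    ultimately show ?thesis by blast
  qed
qed

lemma even_conn_simplify:
  assumes "even_conn E B u v"
  shows "(\<exists>C. C \<subseteq># mset_set (set_mset B) \<and> even_conn E C u v)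
    \<or> (\<exists>C y. C \<subseteq># mset_set (set_mset B) \<and> even_conn E C y y)"
  using assms
proof (induction "size B" arbitrary: B u v rule: less_induct)
  case less
  show ?case
  proof (cases "\<forall>f. count B f \<le> 1")
    case True
    then have "B \<subseteq># mset_set (set_mset B)"
      by (simp add: subseteq_mset_def count_mset_set' Suc_le_eq not_in_iff)
    then show ?thesis using less.prems by blast
  next
    case False
    then obtain f where "2 \<le> count B f" by (metis Suc_1 not_less_eq_eq)
    moreover have "(\<exists>C'. C' \<subseteq># mset_set (set_mset B) \<and> even_conn E C' u' v')
        \<or> (\<exists>C' y. C' \<subseteq># mset_set (set_mset B) \<and> even_conn E C' y y)"
      if C: "C \<subset># B" "even_conn E C u' v'" for C u' v'
    proof -
      have "mset_set (set_mset C) \<subseteq># mset_set (set_mset B)"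
        using C(1) by (simp add: set_mset_mono subset_mset.less_imp_le)
      then show ?thesis
        using less.hyps[OF mset_subset_size[OF C(1)] C(2)] by (meson subset_mset.order_trans)
    qed
    ultimately show ?thesis using even_conn_repeated_edge[OF less.prems] by blast
  qed
qed

section \<open>Colon ideals of powers of the edge ideal\<close>

lemma card_2_other: "card f = 2 \<Longrightarrow> u \<in> f \<Longrightarrow> \<exists>p. f = {u, p} \<and> u \<noteq> p"
  by (auto simp: card_2_iff)

lemma edges_exp_adds_edge_meets_support:
  assumes "\<forall>f\<in>#F. card f = 2" "\<forall>w\<in>#W. card w = 2" "size W < size F"
    and "edges_exp F adds \<alpha> + edges_exp W"
  shows "\<exists>u p. {u, p} \<in># F \<and> u \<noteq> p \<and> 1 \<le> Poly_Mapping.lookup \<alpha> u"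
proof -
  have "deg (edges_exp W) < deg (edges_exp F)"
    using assms(1-3) by (simp add: deg_edges_exp)
  then obtain u where u: "Poly_Mapping.lookup (edges_exp W) u < Poly_Mapping.lookup (edges_exp F) u"
    using deg_mono unfolding adds_def by (meson not_le)
  moreover have "Poly_Mapping.lookup (edges_exp F) u \<le> Poly_Mapping.lookup \<alpha> u + Poly_Mapping.lookup (edges_exp W) u"
    using assms(4) by (simp add: adds_def lookup_add)
  ultimately have "1 \<le> Poly_Mapping.lookup \<alpha> u" by linarith
  moreover obtain f where f: "f \<in># F" "u \<in> f" using u lookup_edges_exp_pos[of F u] by auto
  moreover have "card f = 2" using assms(1) f(1) by blast
  ultimately show ?thesis using card_2_other[of f u] by blast
qed

lemma edges_exp_exchange:
  assumes "edges_exp (add_mset {u, p} F) adds \<alpha> + edges_exp (add_mset {p, q} W)"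
    and "u \<noteq> p" "p \<noteq> q" "1 \<le> Poly_Mapping.lookup \<alpha> u"
  shows "edges_exp F adds (\<alpha> - var_exp u + var_exp q) + edges_exp W"
  unfolding adds_def
proof
  fix v
  have "Poly_Mapping.lookup (sqfree_exp {u, p}) v + Poly_Mapping.lookup (edges_exp F) v
      \<le> Poly_Mapping.lookup \<alpha> v + (Poly_Mapping.lookup (sqfree_exp {p, q}) v + Poly_Mapping.lookup (edges_exp W) v)"
    using assms(1) by (simp add: adds_def lookup_add)
  then show "Poly_Mapping.lookup (edges_exp F) v \<le> Poly_Mapping.lookup (\<alpha> - var_exp u + var_exp q + edges_exp W) v"
    using assms(2-4)
    by (auto simp: lookup_add lookup_minus lookup_single when_def lookup_sqfree_exp split: if_splits)
qed

text \<open>A connection for the exponent \<open>\<alpha> - x\<^sub>u + x\<^sub>q\<close> either avoids \<open>q\<close>, or starts at \<open>q\<close> and is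
  prolonged by \<open>{u, p}\<close> and \<open>{p, q}\<close> to a connection starting at \<open>u\<close>.\<close>

lemma even_conn_unexchange:
  assumes "even_conn E B u' v'" "var_exp u' + var_exp v' adds \<alpha> - var_exp u + var_exp q"
    and "{u, p} \<in> E" "u \<noteq> p" "p \<noteq> q" "1 \<le> Poly_Mapping.lookup \<alpha> u"
  shows "\<exists>u'' v'' B'. B' \<subseteq># add_mset {p, q} B \<and> even_conn E B' u'' v'' \<and> var_exp u'' + var_exp v'' adds \<alpha>"
proof -
  have extend: "\<exists>u'' v'' B'. B' \<subseteq># add_mset {p, q} B \<and> even_conn E B' u'' v'' \<and> var_exp u'' + var_exp v'' adds \<alpha>"
    if "even_conn E B q w" "var_exp q + var_exp w adds \<alpha> - var_exp u + var_exp q" for w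
  proof -
    have "even_conn E (add_mset {p, q} B) u w"
      using assms(3-5) that(1) by (rule even_conn.step)
    moreover have "var_exp u + var_exp w adds \<alpha>"
      unfolding adds_def
    proof
      fix x
      have "Poly_Mapping.lookup (var_exp q + var_exp w) x \<le> Poly_Mapping.lookup (\<alpha> - var_exp u + var_exp q) x"
        using that(2) by (simp add: adds_def)
      then show "Poly_Mapping.lookup (var_exp u + var_exp w) x \<le> Poly_Mapping.lookup \<alpha> x"
        using assms(6) by (cases "x = u") (simp_all add: lookup_add lookup_minus lookup_single when_def)
    qed
    ultimately show ?thesis by (intro exI[of _ u] exI[of _ w] exI[of _ "add_mset {p, q} B"]) simp
  qed
  consider "u' = q" | "v' = q" | "u' \<noteq> q" "v' \<noteq> q" by blast
  then show ?thesis
  proof cases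
    case 1
    then show ?thesis using extend assms(1,2) by blast
  next
    case 2
    then show ?thesis using extend even_conn_sym[OF assms(1)] assms(2) by (simp add: add.commute)
  next
    case 3
    have "var_exp u' + var_exp v' adds \<alpha>"
      unfolding adds_def
    proof
      fix x
      have "Poly_Mapping.lookup (var_exp u' + var_exp v') x \<le> Poly_Mapping.lookup (\<alpha> - var_exp u + var_exp q) x"
        using assms(2) by (simp add: adds_def)
      then show "Poly_Mapping.lookup (var_exp u' + var_exp v') x \<le> Poly_Mapping.lookup \<alpha> x"
        using 3 by (cases "x = q") (simp_all add: lookup_add lookup_minus lookup_single when_def)
    qed
    then show ?thesis using assms(1) by (intro exI[of _ u'] exI[of _ v'] exI[of _ B]) auto
  qed
qed

text \<open>By induction on \<open>|W|\<close>: some edge \<open>{u, p}\<close> of \<open>F\<close>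
  meets the support of \<open>\<alpha>\<close> in \<open>u\<close>; either \<open>p\<close> lies in the support as well, or an edge
  \<open>{p, q}\<close> of \<open>W\<close> covers \<open>p\<close> and is traded for \<open>{u, p}\<close>, replacing \<open>\<alpha>\<close> by \<open>\<alpha> - x\<^sub>u + x\<^sub>q\<close>.\<close>

lemma in_edge_pow_colon_even_conn:
  assumes E2: "\<forall>f\<in>E. card f = 2"
    and "set_mset F \<subseteq> E" "\<forall>w\<in>#W. card w = 2" "size F = size W + 1" "edges_exp F adds \<alpha> + edges_exp W"
  shows "\<exists>u v B. B \<subseteq># W \<and> even_conn E B u v \<and> var_exp u + var_exp v adds \<alpha>"
  using assms(2-)
proof (induction "size W" arbitrary: W F \<alpha> rule: less_induct)
  case less
  have cF: "\<forall>f\<in>#F. card f = 2" using less.prems(1) E2 by auto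
  obtain u p where up: "{u, p} \<in># F" "u \<noteq> p" and au: "1 \<le> Poly_Mapping.lookup \<alpha> u"
    using edges_exp_adds_edge_meets_support[OF cF less.prems(2) _ less.prems(4)] less.prems(3) by auto
  have fE: "{u, p} \<in> E" using up less.prems(1) by auto
  show ?case
  proof (cases "1 \<le> Poly_Mapping.lookup \<alpha> p")
    case True
    then have "var_exp u + var_exp p adds \<alpha>"
      using au up(2) by (auto simp: adds_def lookup_add lookup_single when_def)
    then show ?thesis using even_conn.edge[OF fE up(2)] by (intro exI[of _ u] exI[of _ p] exI[of _ "{#}"]) simp
  next
    case False
    moreover have "Poly_Mapping.lookup (edges_exp F) p \<le> Poly_Mapping.lookup \<alpha> p + Poly_Mapping.lookup (edges_exp W) p"
      using less.prems(4) by (simp add: adds_def lookup_add)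
    ultimately have "0 < Poly_Mapping.lookup (edges_exp W) p"
      using lookup_edges_exp_mem[OF up(1), of p] by simp
    then obtain w where w: "w \<in># W" "p \<in> w" using lookup_edges_exp_pos[of W p] by blast
    moreover have "card w = 2" using less.prems(2) w(1) by blast
    ultimately obtain q where q: "w = {p, q}" "p \<noteq> q" using card_2_other[of w p] by blast
    define W' where "W' = W - {#w#}"
    define F' where "F' = F - {#{u, p}#}"
    have W: "W = add_mset {p, q} W'" and F: "F = add_mset {u, p} F'"
      using w up q unfolding W'_def F'_def by simp_all
    have "edges_exp F' adds (\<alpha> - var_exp u + var_exp q) + edges_exp W'"
      by (rule edges_exp_exchange) (use less.prems(4) W F up q au in simp_all)
    moreover have "size W' < size W" "\<forall>w\<in>#W'. card w = 2" "size F' = size W' + 1"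
      using less.prems(2,3) unfolding W F by simp_all
    moreover have "set_mset F' \<subseteq> E"
      using less.prems(1) unfolding F'_def by (meson in_diffD subset_iff)
    ultimately obtain u' v' B where B: "B \<subseteq># W'" "even_conn E B u' v'"
        "var_exp u' + var_exp v' adds \<alpha> - var_exp u + var_exp q"
      using less.hyps by blast
    then obtain u'' v'' B' where B': "B' \<subseteq># add_mset {p, q} B" "even_conn E B' u'' v''"
        "var_exp u'' + var_exp v'' adds \<alpha>"
      using even_conn_unexchange[OF B(2,3) fE up(2) q(2) au] by blast
    have "add_mset {p, q} B \<subseteq># W" using B(1) W by simp
    then have "B' \<subseteq># W" using B'(1) by (rule subset_mset.order_trans[rotated])
    then show ?thesis using B'(2,3) by blast
  qed
qed

lemma in_edge_pow_colon_support:
  assumes E2: "\<forall>f\<in>E. card f = 2" and DE: "set_mset D \<subseteq> E"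
    and no_odd: "\<And>C y. C \<subseteq># D \<Longrightarrow> \<not> even_conn E C y y"
    and WD: "set_mset W \<subseteq> set_mset D"
    and "in_edge_pow E (size W + 1) (b + edges_exp W)"
  shows "in_edge_pow E (size D + 1) (b + edges_exp D)"
proof -
  obtain F where F: "set_mset F \<subseteq> E" "size F = size W + 1" "edges_exp F adds b + edges_exp W"
    using assms(5) unfolding in_edge_pow_def by blast
  have "\<forall>w\<in>#W. card w = 2" using WD DE E2 by auto
  then obtain u v B where B: "B \<subseteq># W" "even_conn E B u v" "var_exp u + var_exp v adds b"
    using in_edge_pow_colon_even_conn[OF E2 F(1) _ F(2,3)] by blast
  have "set_mset B \<subseteq> set_mset D" using set_mset_mono[OF B(1)] WD by (rule order_trans)
  then have BD: "mset_set (set_mset B) \<subseteq># D"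
    using mset_set_set_mset_msubset[of D] by (meson finite_set_mset msubset_mset_set_iff subset_mset.order_trans)
  have "\<not> even_conn E C y y" if "C \<subseteq># mset_set (set_mset B)" for C y
    using no_odd subset_mset.order_trans[OF that BD] by blast
  then obtain C where "C \<subseteq># mset_set (set_mset B)" "even_conn E C u v"
    using even_conn_simplify[OF B(2)] by blast
  then have C: "C \<subseteq># D" "even_conn E C u v"
    using BD by (auto intro: subset_mset.order_trans)
  have "in_edge_pow E (size D + 1) (var_exp u + var_exp v + edges_exp D)"
    using even_conn_in_edge_pow[OF C(2)] C(1) DE by (rule in_edge_pow_colon_mono)
  then show ?thesis using B(3) by (elim in_edge_pow_mono) (simp add: add_adds_add)
qed

lemma squarefree_monomial_ideal_support:
  assumes "squarefree_monomial_ideal I" "monomial b \<in> I"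
  shows "sqfree_monomial (Poly_Mapping.keys b) \<in> I"
proof -
  obtain S where S: "S \<subseteq> range sqfree_monomial" "I = ideal_gen S"
    using assms(1) unfolding squarefree_monomial_ideal_def by blast
  define As where "As = {A. sqfree_monomial A \<in> S}"
  have "S = sqfree_monomial ` As"
    using S(1) unfolding As_def by blast
  also have "\<dots> = monomial ` sqfree_exp ` As"
    by (simp add: image_image sqfree_monomial_eq)
  finally have I: "I = monomial_ideal (sqfree_exp ` As)"
    using S(2) by (simp add: ideal_gen_monomial)
  then obtain A where A: "A \<in> As" "sqfree_exp A adds b"
    using assms(2) unfolding I monomial_in_monomial_ideal_iff by blast
  have "sqfree_exp A adds sqfree_exp (Poly_Mapping.keys b)"
  proof (cases "finite A")
    case True
    show ?thesis
      unfolding adds_def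
    proof
      fix v
      show "Poly_Mapping.lookup (sqfree_exp A) v \<le> Poly_Mapping.lookup (sqfree_exp (Poly_Mapping.keys b)) v"
      proof (cases "v \<in> A")
        case v: True
        then have "1 \<le> Poly_Mapping.lookup b v"
          using A(2) True by (metis adds_def lookup_sqfree_exp)
        then show ?thesis using v True by (simp add: lookup_sqfree_exp in_keys_iff)
      qed (simp add: lookup_sqfree_exp_outside)
    qed
  next
    case False
    then show ?thesis by (simp add: sqfree_exp_def adds_def)
  qed
  then have "monomial (sqfree_exp (Poly_Mapping.keys b)) \<in> I"
    unfolding I monomial_in_monomial_ideal_iff using A(1) by blast
  then show ?thesis by (simp add: sqfree_monomial_eq)
qed

lemma squarefree_colon_no_odd_closed_walk:
  fixes W :: "'v set multiset"
  assumes E2: "\<forall>f\<in>E. card f = 2" and WE: "set_mset W \<subseteq> E"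
    and sq: "squarefree_monomial_ideal
      (ideal_colon (ideal_pow (edge_ideal E :: ('v, 'k::comm_ring_1) mpoly set) (size W + 1))
        (monomial (edges_exp W)))"
    and CW: "C \<subseteq># W"
  shows "\<not> even_conn E C y y"
proof
  let ?J = "ideal_colon (ideal_pow (edge_ideal E :: ('v, 'k) mpoly set) (size W + 1)) (monomial (edges_exp W))"
  assume "even_conn E C y y"
  then have "in_edge_pow E (size C + 1) (var_exp y + var_exp y + edges_exp C)"
    by (rule even_conn_in_edge_pow)
  then have "in_edge_pow E (size W + 1) (var_exp y + var_exp y + edges_exp W)"
    using CW WE by (rule in_edge_pow_colon_mono)
  then have "in_edge_pow E (size W + 1) (Poly_Mapping.single y 2 + edges_exp W)"
    by (metis one_add_one single_add)
  then have "monomial (Poly_Mapping.single y 2) \<in> ?J"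
    unfolding ideal_colon_edge_pow by (simp add: monomial_in_monomial_ideal)
  then have "sqfree_monomial (Poly_Mapping.keys (Poly_Mapping.single y (2::nat))) \<in> ?J"
    by (rule squarefree_monomial_ideal_support[OF sq])
  then have "monomial (var_exp y) \<in> ?J"
    by (simp add: sqfree_monomial_eq sqfree_exp_def)
  then have "in_edge_pow E (size W + 1) (var_exp y + edges_exp W)"
    unfolding ideal_colon_edge_pow monomial_in_monomial_ideal_iff
    by (auto elim!: in_edge_pow_mono intro: add_adds_add)
  then have "2 * (size W + 1) \<le> deg (var_exp y + edges_exp W)"
    by (rule in_edge_pow_deg[OF E2])
  moreover have "\<forall>w\<in>#W. card w = 2" using WE E2 by auto
  ultimately show False by (simp add: deg_edges_exp)
qed

lemma colon_edge_pow_eq_support: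
  assumes E2: "\<forall>f\<in>E. card f = 2" and DW: "D \<subseteq># W" "set_mset W \<subseteq> set_mset D"
    and DE: "set_mset D \<subseteq> E" and no_odd: "\<And>C y. C \<subseteq># D \<Longrightarrow> \<not> even_conn E C y y"
  shows "ideal_colon (ideal_pow (edge_ideal E :: ('v, 'k::comm_ring_1) mpoly set) (size W + 1)) (monomial (edges_exp W))
    = ideal_colon (ideal_pow (edge_ideal E) (size D + 1)) (monomial (edges_exp D))"
proof -
  have "set_mset W \<subseteq> E" using DW(2) DE by blast
  then have "in_edge_pow E (size W + 1) (b + edges_exp W) \<longleftrightarrow> in_edge_pow E (size D + 1) (b + edges_exp D)" for b
    using in_edge_pow_colon_support[OF E2 DE no_odd DW(2)] in_edge_pow_colon_mono[OF _ DW(1)] by blast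
  then show ?thesis unfolding ideal_colon_edge_pow by simp
qed

lemma edges_exp_two_edges_cover:
  assumes "\<forall>f\<in>#F. finite f" "2 \<le> size F"
  obtains f1 f2 F' where "F = add_mset f1 (add_mset f2 F')"
    "\<And>v. v \<in> {p, q} \<Longrightarrow> 1 \<le> Poly_Mapping.lookup (edges_exp F) v
      \<Longrightarrow> Poly_Mapping.lookup (edges_exp F') v + 1 \<le> Poly_Mapping.lookup (edges_exp F) v"
proof -
  have through: "\<exists>f G. H = add_mset f G \<and> ((\<exists>g\<in>#H. v \<in> g) \<longrightarrow> v \<in> f)" if "H \<noteq> {#}" for H :: "'a set multiset" and v
    using that by (metis insert_DiffM multiset_nonemptyE)
  have "F \<noteq> {#}" using assms(2) by auto
  then obtain f1 F1 where F1: "F = add_mset f1 F1" "(\<exists>g\<in>#F. p \<in> g) \<longrightarrow> p \<in> f1"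
    using through by blast
  have "F1 \<noteq> {#}" using assms(2) F1(1) by auto
  then obtain f2 F' where F': "F1 = add_mset f2 F'" "(\<exists>g\<in>#F1. q \<in> g) \<longrightarrow> q \<in> f2"
    using through by blast
  have fin: "finite f1" "finite f2" using assms(1) F1(1) F'(1) by auto
  show ?thesis
  proof (rule that[OF _ ])
    show "F = add_mset f1 (add_mset f2 F')" using F1(1) F'(1) by simp
  next
    fix v assume v: "v \<in> {p, q}" and pos: "1 \<le> Poly_Mapping.lookup (edges_exp F) v"
    have F_v: "Poly_Mapping.lookup (edges_exp F) v = Poly_Mapping.lookup (sqfree_exp f1) v
        + Poly_Mapping.lookup (sqfree_exp f2) v + Poly_Mapping.lookup (edges_exp F') v"
      using F1(1) F'(1) by (simp add: lookup_add)
    have "\<exists>g\<in>#F. v \<in> g" using pos lookup_edges_exp_pos[of F v] by simp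
    then have "v \<in> f1 \<or> v \<in> f2"
      using v F1 F' lookup_edges_exp_pos[of F1 v] by (auto simp: lookup_add lookup_sqfree_exp_outside)
    then show "Poly_Mapping.lookup (edges_exp F') v + 1 \<le> Poly_Mapping.lookup (edges_exp F) v"
      using F_v fin by (auto simp: lookup_sqfree_exp)
  qed
qed

text \<open>The colon ideal \<open>I(G)\<^sup>k\<^sup>+\<^sup>2 : e\<close> is contained in \<open>(I(G)\<^sup>2 : e) I(G)\<^sup>k\<close>: two edges covering the
  vertices of \<open>e\<close> as often as possible are absorbed by \<open>e\<close>.\<close>

lemma in_edge_pow_colon_edge:
  assumes E2: "\<forall>f\<in>E. card f = 2" and e: "e = {p, q}"
    and "in_edge_pow E (k + 2) (b + sqfree_exp e)"
  shows "\<exists>g F. in_edge_pow E 2 (g + sqfree_exp e) \<and> set_mset F \<subseteq> E \<and> size F = k \<and> g + edges_exp F = b"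
proof -
  obtain F0 where F0: "set_mset F0 \<subseteq> E" "size F0 = k + 2" "edges_exp F0 adds b + sqfree_exp e"
    using assms(3) unfolding in_edge_pow_def by blast
  have "\<forall>f\<in>#F0. finite f" using F0(1) E2 by (metis card.infinite subsetD zero_neq_numeral)
  then obtain f1 f2 F where F: "F0 = add_mset f1 (add_mset f2 F)"
    and cover: "\<And>v. v \<in> {p, q} \<Longrightarrow> 1 \<le> Poly_Mapping.lookup (edges_exp F0) v
      \<Longrightarrow> Poly_Mapping.lookup (edges_exp F) v + 1 \<le> Poly_Mapping.lookup (edges_exp F0) v"
    using edges_exp_two_edges_cover F0(2) by (metis le_add2)
  have pointwise: "Poly_Mapping.lookup (edges_exp F) v \<le> Poly_Mapping.lookup b v \<and>
      Poly_Mapping.lookup (sqfree_exp f1 + sqfree_exp f2) v \<le> Poly_Mapping.lookup (b - edges_exp F + sqfree_exp e) v" for v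
  proof -
    have F0_v: "Poly_Mapping.lookup (edges_exp F0) v = Poly_Mapping.lookup (sqfree_exp f1) v
        + Poly_Mapping.lookup (sqfree_exp f2) v + Poly_Mapping.lookup (edges_exp F) v"
      using F by (simp add: lookup_add)
    have le: "Poly_Mapping.lookup (edges_exp F0) v \<le> Poly_Mapping.lookup b v + Poly_Mapping.lookup (sqfree_exp e) v"
      using F0(3) by (simp add: adds_def lookup_add)
    show ?thesis
    proof (cases "v \<in> {p, q}")
      case True
      then have e_v: "Poly_Mapping.lookup (sqfree_exp e) v = 1" using e by (simp add: lookup_sqfree_exp)
      have "Poly_Mapping.lookup (edges_exp F) v \<le> Poly_Mapping.lookup b v"
        using cover[OF True] F0_v le e_v by (cases "1 \<le> Poly_Mapping.lookup (edges_exp F0) v") linarith+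
      then show ?thesis using F0_v le e_v by (simp add: lookup_add lookup_minus)
    next
      case False
      then have "Poly_Mapping.lookup (sqfree_exp e) v = 0" using e by (simp add: lookup_sqfree_exp)
      then show ?thesis using F0_v le by (simp add: lookup_add lookup_minus)
    qed
  qed
  then have "edges_exp F adds b" by (simp add: adds_def)
  then have "(b - edges_exp F) + edges_exp F = b" by (rule adds_diff_add)
  moreover have "in_edge_pow E 2 ((b - edges_exp F) + sqfree_exp e)"
    using in_edge_pow_edges_exp[of "{#f1, f2#}" E] F F0(1) pointwise
    by (auto simp: numeral_2_eq_2 adds_def elim!: in_edge_pow_mono)
  moreover have "set_mset F \<subseteq> E" "size F = k" using F0(1,2) F by auto
  ultimately show ?thesis by blast
qed

lemma nfold_sums_colon_in_edge_pow:
  "g \<in> nfold_sums {g. in_edge_pow E 2 (g + sqfree_exp e)} n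
    \<Longrightarrow> in_edge_pow E (2 * n) (g + edges_exp (replicate_mset n e))"
proof (induction n arbitrary: g)
  case 0
  then show ?case by (simp add: nfold_sums_def in_edge_pow_def)
next
  case (Suc n)
  then obtain h hs where "g = h + sum_list hs" "length hs = n"
      "in_edge_pow E 2 (h + sqfree_exp e)" "set hs \<subseteq> {g. in_edge_pow E 2 (g + sqfree_exp e)}"
    unfolding nfold_sums_def by (auto simp: length_Suc_conv)
  then have "in_edge_pow E (2 + 2 * n) ((h + sqfree_exp e) + (sum_list hs + edges_exp (replicate_mset n e)))"
    using Suc.IH[of "sum_list hs"] in_edge_pow_add unfolding nfold_sums_def by blast
  then show ?case using \<open>g = h + sum_list hs\<close> by (simp add: algebra_simps)
qed

lemma colon_edge_pow_eq_colon_sq: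
  assumes E2: "\<forall>f\<in>E. card f = 2" and DE: "set_mset (add_mset e D) \<subseteq> E"
    and no_odd: "\<And>C y. C \<subseteq># add_mset e D \<Longrightarrow> \<not> even_conn E C y y"
  shows "ideal_colon (ideal_pow (edge_ideal E :: ('v, 'k::comm_ring_1) mpoly set) (size D + 2))
      (monomial (edges_exp (add_mset e D)))
    = ideal_colon (ideal_pow (ideal_colon (ideal_pow (edge_ideal E) 2) (sqfree_monomial e)) (size D + 1))
      (monomial (edges_exp D))"
proof -
  let ?N = "{g. in_edge_pow E 2 (g + sqfree_exp e)}"
  obtain p q where e: "e = {p, q}" using DE E2 by (metis card_2_iff insert_subset set_mset_add_mset_insert)
  have "in_edge_pow E (size D + 2) (b + edges_exp (add_mset e D))
      \<longleftrightarrow> (\<exists>g\<in>nfold_sums ?N (size D + 1). g adds b + edges_exp D)" for b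
  proof
    assume "in_edge_pow E (size D + 2) (b + edges_exp (add_mset e D))"
    then obtain g F where g: "in_edge_pow E 2 (g + sqfree_exp e)" and F: "set_mset F \<subseteq> E" "size F = size D"
        and sum: "g + edges_exp F = b + edges_exp D"
      using in_edge_pow_colon_edge[OF E2 e, of "size D" "b + edges_exp D"] by (auto simp: algebra_simps)
    obtain fs where fs: "mset fs = F" using ex_mset by blast
    have "in_edge_pow E 2 (sqfree_exp f + sqfree_exp e)" if "f \<in> set fs" for f
      using in_edge_pow_edges_exp[of "{#f, e#}" E] that fs F(1) DE by (auto simp: numeral_2_eq_2)
    then have "g + sum_list (map sqfree_exp fs) \<in> nfold_sums ?N (size D + 1)"
      unfolding nfold_sums_def using g fs F(2) by (intro CollectI exI[of _ "g # map sqfree_exp fs"]) auto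
    then show "\<exists>g\<in>nfold_sums ?N (size D + 1). g adds b + edges_exp D"
      using sum fs by (metis adds_refl edges_exp_mset)
  next
    assume "\<exists>g\<in>nfold_sums ?N (size D + 1). g adds b + edges_exp D"
    then obtain g where g: "g \<in> nfold_sums ?N (size D + 1)" "g adds b + edges_exp D" by blast
    let ?W = "D + replicate_mset (size D + 1) e"
    have "in_edge_pow E (2 * (size D + 1)) (g + edges_exp (replicate_mset (size D + 1) e))"
      by (rule nfold_sums_colon_in_edge_pow[OF g(1)])
    then have "in_edge_pow E (2 * (size D + 1)) (b + edges_exp D + edges_exp (replicate_mset (size D + 1) e))"
      by (rule in_edge_pow_mono) (simp add: add_adds_add g(2))
    then have W: "in_edge_pow E (size ?W + 1) (b + edges_exp ?W)"
      by (simp add: add.assoc add.left_commute mult_2)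
    have "set_mset ?W \<subseteq> set_mset (add_mset e D)" by auto
    from in_edge_pow_colon_support[OF E2 DE no_odd this W]
    show "in_edge_pow E (size D + 2) (b + edges_exp (add_mset e D))" by simp
  qed
  then show ?thesis
    unfolding sqfree_monomial_eq ideal_colon_edge_pow ideal_pow_monomial_ideal ideal_colon_monomial_ideal
    by simp
qed

lemma sum_singleton_subseteq_sum_replicate:
  "\<forall>i\<in>I. 0 < a i \<Longrightarrow> (\<Sum>i\<in>I. {#e i#}) \<subseteq># (\<Sum>i\<in>I. replicate_mset (a i) (e i))"
  unfolding subseteq_mset_def count_sum by (force intro: sum_mono simp: Suc_le_eq)

theorem lemma3p3:
  fixes E :: "('v::finite) set set"
    and s t :: nat
    and e :: "nat \<Rightarrow> 'v set"
    and a :: "nat \<Rightarrow> nat"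
  assumes "simple_graph E"
    and "s \<ge> 1"
    and "\<forall>i\<in>{1..s}. e i \<in> E"
    and "inj_on e {1..s}"
    and "\<forall>i\<in>{1..s}. a i > 0"
    and "t = (\<Sum>i=1..s. a i) + 1"
    and "squarefree_monomial_ideal
           (ideal_colon (ideal_pow (edge_ideal E :: ('v, 'k::field) mpoly set) t)
              (\<Prod>i=1..s. edge_monomial (e i) ^ a i))"
  shows "ideal_colon (ideal_pow (edge_ideal E :: ('v, 'k) mpoly set) t)
            (\<Prod>i=1..s. edge_monomial (e i) ^ a i)
       = ideal_colon (ideal_pow (edge_ideal E) (s + 1)) (\<Prod>i=1..s. edge_monomial (e i))
     \<and> ideal_colon (ideal_pow (edge_ideal E) (s + 1)) (\<Prod>i=1..s. edge_monomial (e i))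
       = ideal_colon (ideal_pow (ideal_colon (ideal_pow (edge_ideal E) 2) (edge_monomial (e 1))) s)
            (\<Prod>i=2..s. edge_monomial (e i))"
proof -
  have E2: "\<forall>f\<in>E. card f = 2" using assms(1) unfolding simple_graph_def .
  define W where "W = (\<Sum>i\<in>{1..s}. replicate_mset (a i) (e i))"
  define D' where "D' = (\<Sum>i\<in>{2..s}. {#e i#})"
  define D where "D = add_mset (e 1) D'"
  have "{1..s} = insert 1 {2..s}" using assms(2) by auto
  then have D_sum: "D = (\<Sum>i\<in>{1..s}. {#e i#})" by (simp add: D_def D'_def)
  have DW: "D \<subseteq># W" "set_mset W \<subseteq> set_mset D"
    using assms(5) sum_singleton_subseteq_sum_replicate
    by (auto simp: W_def D_sum set_mset_sum split: if_splits)
  have DE: "set_mset D \<subseteq> E" using assms(3) by (auto simp: D_sum set_mset_sum)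
  have size: "t = size W + 1" "s = size D" "s = size D' + 1"
    using assms(2,6) by (simp_all add: W_def D_def D'_def)
  \<comment> \<open>The second equation is stated over an arbitrary coefficient ring, so only \<open>mon(1)\<close>
    is tied to the field \<open>'k\<close> of the hypothesis.\<close>
  have mon: "(\<Prod>i=1..s. edge_monomial (e i) ^ a i) = (monomial (edges_exp W) :: ('v, 'k) mpoly)"
    "(\<Prod>i=1..s. edge_monomial (e i)) = monomial (edges_exp D)"
    "(\<Prod>i=2..s. edge_monomial (e i)) = monomial (edges_exp D')"
    by (simp_all add: W_def D_sum D'_def prod_sqfree_monomial_power prod_sqfree_monomial)
  have no_odd: "\<not> even_conn E C y y" if "C \<subseteq># D" for C y
    using squarefree_colon_no_odd_closed_walk[OF E2 _ assms(7)[unfolded mon size(1)]] DW DE that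
    by (meson order_trans subset_mset.order_trans)
  have "ideal_colon (ideal_pow (edge_ideal E :: ('v, 'k) mpoly set) t) (monomial (edges_exp W))
      = ideal_colon (ideal_pow (edge_ideal E) (s + 1)) (monomial (edges_exp D))"
    unfolding size(1,2) using DW DE no_odd by (rule colon_edge_pow_eq_support[OF E2])
  moreover have "ideal_colon (ideal_pow (edge_ideal E) (s + 1)) (monomial (edges_exp D))
      = ideal_colon (ideal_pow (ideal_colon (ideal_pow (edge_ideal E) 2) (edge_monomial (e 1))) s)
          (monomial (edges_exp D'))"
    using colon_edge_pow_eq_colon_sq[OF E2 DE[unfolded D_def] no_odd[unfolded D_def]]
    unfolding size(3) D_def by simp
  ultimately show ?thesis unfolding mon by blast
qed

end
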